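(* Let $d\mu(x)=e^{-V(x)}\,dx$ be a probability measure on $\mathbb R$ with $V$ smooth and even. Assume that $V$ is concave on $(R,+\infty)$ for some $R>0$ and that $V''(x)/V'(x)^2\to r$ as $x\to\infty$ for some $r>-1/2$. Then there exist $S>R$ and $C>0$ such that for all smooth $g$, $$\mathrm{Var}_\mu(g)\le C\int|g'(x)|^2\Big(1+\frac{\mathbf 1_{|x|>S}}{V'(x)^2}\Big)d\mu(x),\qquad \int|g-m|\,d\mu\le C\int|g'(x)|\Big(1+\frac{\mathbf 1_{|x|>S}}{|V'(x)|}\Big)d\mu(x),$$ where $m$ is a median of $g$ under $\mu$. *)

theory Defs
  imports "HOL-Probability.Probability"
begin

definition smooth :: "(real \<Rightarrow> real) \<Rightarrow> bool" where
  "smooth f \<longleftrightarrow> (\<forall>n x. ((deriv ^^ n) f) differentiable (at x))"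

definition mu :: "(real \<Rightarrow> real) \<Rightarrow> real measure" where
  "mu V = density lborel (\<lambda>x. ennreal (exp (- V x)))"

definition is_median :: "real measure \<Rightarrow> (real \<Rightarrow> real) \<Rightarrow> real \<Rightarrow> bool" where
  "is_median M g m \<longleftrightarrow>
     measure M {x \<in> space M. g x \<le> m} \<ge> 1/2 \<and> measure M {x \<in> space M. g x \<ge> m} \<ge> 1/2"

text \<open>Variance as an extended nonnegative real (infinite when g is not square integrable).\<close>
definition Var :: "real measure \<Rightarrow> (real \<Rightarrow> real) \<Rightarrow> ennreal" where
  "Var M g = (\<integral>\<^sup>+ x. ennreal ((g x - (\<integral> y. g y \<partial>M))\<^sup>2) \<partial>M)"

end

theory Submission
  imports Defs
begin

(*
  The proof is a Lyapunov-function argument carried out on each half line.  With E = exp(-V)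
  and D = V', for a function h with h' = G one integrates the derivative of a potential:
  on a compact inner region [0,b] the potential h^2 E exp(-B x), where B dominates -D, yields
  a classical Poincare inequality; on the tail [b,oo), where D > 0 and 1 + D'/D^2 >= c > 0,
  the potential h^2 E / D yields a Poincare inequality with gradient weight 1/D^2.  The L1
  version uses the same potentials with h^2 replaced by the primitive of |G|.

  Reflection x -> -x and evenness of V give the whole line.  Finally,
  the variance is at most the second moment about g 0 and the deviation from a median is at
  most three times the deviation from g 0; the hypotheses on V (concavity on (R,oo) together
  with integrability, and the limit of V''/V'^2) supply the tail conditions D > 0 and
  1 + D'/D^2 >= 1/4 beyond some S > R.
*)

lemma ftc_potential_bound:
  fixes F F' p q :: "real \<Rightarrow> real"
  assumes ab: "a \<le> b"
    and dF: "\<And>x. x \<in> {a..b} \<Longrightarrow> (F has_real_derivative F' x) (at x within {a..b})"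
    and cp: "continuous_on {a..b} p" and cq: "continuous_on {a..b} q"
    and le: "\<And>x. x \<in> {a..b} \<Longrightarrow> p x \<le> q x - F' x"
  shows "integral {a..b} p \<le> integral {a..b} q + F a - F b"
proof -
  have "(F' has_integral (F b - F a)) {a..b}"
    by (rule fundamental_theorem_of_calculus[OF ab])
      (use dF in \<open>simp add: has_real_derivative_iff_has_vector_derivative\<close>)
  moreover have "(q has_integral integral {a..b} q) {a..b}"
    using integrable_continuous_interval[OF cq] by (simp add: integrable_integral)
  ultimately have "((\<lambda>x. q x - F' x) has_integral (integral {a..b} q - (F b - F a))) {a..b}"
    by (intro has_integral_diff)
  moreover have "(p has_integral integral {a..b} p) {a..b}"
    using integrable_continuous_interval[OF cp] by (simp add: integrable_integral)
  ultimately have "integral {a..b} p \<le> integral {a..b} q - (F b - F a)"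
    using has_integral_le le by blast
  then show ?thesis by simp
qed

lemma young_ineq:
  fixes e x y :: real
  assumes "0 < e"
  shows "2 * x * y \<le> e/2 * x^2 + 2/e * y^2"
proof -
  have "e/2 * x^2 + 2/e * y^2 - 2 * x * y = (e * x - 2 * y)^2 / (2 * e)"
    using assms by (simp add: field_simps power2_eq_square)
  also have "\<dots> \<ge> 0" using assms by simp
  finally show ?thesis by simp
qed

text \<open>On [0,b] the weight u(x) = exp(-B x) lies between exp(-B b) and 1, and u * d >= exp(-B b)
  whenever d >= 1.  With d = D + B this makes the product u E decrease fast enough.\<close>
lemma exp_weight_bounds:
  fixes b B x d :: real
  assumes "0 \<le> B" "x \<in> {0..b}" "1 \<le> d"
  shows "exp (- B * b) \<le> exp (- B * x)" "exp (- B * x) \<le> 1" "exp (- B * b) \<le> exp (- B * x) * d"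
proof -
  have "B * x \<le> B * b" "0 \<le> B * x" using assms(1,2) by (auto intro: mult_left_mono)
  then have "exp (- B * b) \<le> exp (- B * x)" "exp (- B * x) \<le> 1" by simp_all
  moreover have "exp (- B * x) * 1 \<le> exp (- B * x) * d"
    using assms(3) by (intro mult_left_mono) auto
  ultimately show "exp (- B * b) \<le> exp (- B * x)" "exp (- B * x) \<le> 1"
    "exp (- B * b) \<le> exp (- B * x) * d" by linarith+
qed

text \<open>Inner L2 estimate on [0,b] for a positive weight E with E' = -D E and h 0 = 0: the potential
  h^2 E exp(-B x) yields an L2 Poincare inequality with constants depending only on B and b.\<close>
lemma inner_estimate_L2:
  fixes E D h G :: "real \<Rightarrow> real" and b B :: real
  assumes "0 \<le> b" "0 \<le> B"
    and dE: "\<And>x. (E has_real_derivative - D x * E x) (at x)"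
    and Epos: "\<And>x. 0 < E x"
    and DB: "\<And>x. x \<in> {0..b} \<Longrightarrow> 1 \<le> D x + B"
    and dh: "\<And>x. (h has_real_derivative G x) (at x)"
    and cG: "continuous_on {0..b} G"
    and h0: "h 0 = 0"
  defines "\<epsilon> \<equiv> exp (- B * b)"
  shows "\<epsilon>/2 * integral {0..b} (\<lambda>x. h x^2 * E x) + \<epsilon> * (h b^2 * E b)
           \<le> 2/\<epsilon> * integral {0..b} (\<lambda>x. G x^2 * E x)"
proof -
  define u where "u x = exp (- B * x)" for x
  have u: "0 < u x" "u x \<le> 1" "\<epsilon> \<le> u x * (D x + B)" if "x \<in> {0..b}" for x
    using exp_weight_bounds[OF assms(2) that DB[OF that]] by (simp_all add: u_def \<epsilon>_def)
  have du: "(u has_real_derivative - B * u x) (at x)" for x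
    unfolding u_def by (rule DERIV_cong, (rule derivative_eq_intros)+) auto
  have cE: "continuous_on A E" for A
    using dE by (meson DERIV_isCont continuous_at_imp_continuous_on)
  have ch: "continuous_on A h" for A
    using dh by (meson DERIV_isCont continuous_at_imp_continuous_on)
  have "integral {0..b} (\<lambda>x. \<epsilon>/2 * (h x^2 * E x)) \<le> integral {0..b} (\<lambda>x. 2/\<epsilon> * (G x^2 * E x))
          + h 0^2 * E 0 * u 0 - h b^2 * E b * u b"
  proof (rule ftc_potential_bound[where F = "\<lambda>x. h x^2 * E x * u x" and F' = "\<lambda>x. 2*h x*G x*E x*u x - h x^2*E x*u x*(D x + B)"])
    fix x assume x: "x \<in> {0..b}"
    have "((\<lambda>x. h x^2 * E x * u x) has_real_derivative 2*h x*G x*E x*u x - h x^2*E x*u x*(D x + B)) (at x)"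
      using DERIV_mult[OF DERIV_mult[OF DERIV_power[OF dh, of 2] dE] du]
      by (rule DERIV_cong) (simp add: algebra_simps power2_eq_square)
    then show "((\<lambda>x. h x^2 * E x * u x) has_real_derivative 2*h x*G x*E x*u x - h x^2*E x*u x*(D x + B)) (at x within {0..b})"
      by (rule has_field_derivative_at_within)
    have "h x * G x * u x \<le> \<bar>h x\<bar> * \<bar>G x\<bar> * u x"
      using u(1)[OF x] by (intro mult_right_mono) (auto simp: abs_mult[symmetric])
    also have "\<dots> \<le> \<bar>h x\<bar> * \<bar>G x\<bar>"
      using u(1,2)[OF x] by (intro mult_left_le) auto
    finally have "h x * G x * u x \<le> \<bar>h x\<bar> * \<bar>G x\<bar>" .
    moreover have "2 * \<bar>h x\<bar> * \<bar>G x\<bar> \<le> \<epsilon>/2 * \<bar>h x\<bar>^2 + 2/\<epsilon> * \<bar>G x\<bar>^2"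
      by (rule young_ineq) (simp add: \<epsilon>_def)
    moreover have "h x^2 * \<epsilon> \<le> h x^2 * (u x * (D x + B))"
      using u(3)[OF x] by (intro mult_left_mono) auto
    ultimately have "\<epsilon>/2 * h x^2 \<le> 2/\<epsilon> * G x^2 - (2*h x*G x*u x - h x^2*u x*(D x + B))"
      by (simp add: algebra_simps)
    from mult_right_mono[OF this less_imp_le[OF Epos[of x]]]
    show "\<epsilon>/2 * (h x^2 * E x) \<le> 2/\<epsilon> * (G x^2 * E x) - (2*h x*G x*E x*u x - h x^2*E x*u x*(D x + B))"
      by (simp add: algebra_simps)
  qed (use assms(1) in \<open>auto intro!: continuous_intros ch cE cG simp: \<epsilon>_def\<close>)
  moreover have "u b = \<epsilon>" by (simp add: u_def \<epsilon>_def)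
  ultimately show ?thesis
    using h0 by (simp only: integral_mult_right) (simp add: mult_ac)
qed

lemma inner_estimate_L1:
  fixes E D H H' :: "real \<Rightarrow> real" and b B :: real
  assumes "0 \<le> b" "0 \<le> B"
    and dE: "\<And>x. (E has_real_derivative - D x * E x) (at x)"
    and Epos: "\<And>x. 0 < E x"
    and DB: "\<And>x. x \<in> {0..b} \<Longrightarrow> 1 \<le> D x + B"
    and dH: "\<And>x. x \<in> {0..b} \<Longrightarrow> (H has_real_derivative H' x) (at x within {0..b})"
    and cH': "continuous_on {0..b} H'"
    and H'_nonneg: "\<And>x. x \<in> {0..b} \<Longrightarrow> 0 \<le> H' x"
    and H_nonneg: "\<And>x. x \<in> {0..b} \<Longrightarrow> 0 \<le> H x"
    and H0: "H 0 = 0"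
  defines "\<epsilon> \<equiv> exp (- B * b)"
  shows "\<epsilon> * integral {0..b} (\<lambda>x. H x * E x) + \<epsilon> * (H b * E b)
           \<le> integral {0..b} (\<lambda>x. H' x * E x)"
proof -
  define u where "u x = exp (- B * x)" for x
  have u: "0 < u x" "u x \<le> 1" "\<epsilon> \<le> u x * (D x + B)" if "x \<in> {0..b}" for x
    using exp_weight_bounds[OF assms(2) that DB[OF that]] by (simp_all add: u_def \<epsilon>_def)
  have du: "(u has_real_derivative - B * u x) (at x)" for x
    unfolding u_def by (rule DERIV_cong, (rule derivative_eq_intros)+) auto
  have cE: "continuous_on A E" for A
    using dE by (meson DERIV_isCont continuous_at_imp_continuous_on)
  have cH: "continuous_on {0..b} H"
    using dH by (rule DERIV_continuous_on)
  have "integral {0..b} (\<lambda>x. \<epsilon> * (H x * E x)) \<le> integral {0..b} (\<lambda>x. H' x * E x)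
          + H 0 * E 0 * u 0 - H b * E b * u b"
  proof (rule ftc_potential_bound[where F = "\<lambda>x. H x * E x * u x" and F' = "\<lambda>x. H' x*E x*u x - H x*E x*u x*(D x + B)"])
    fix x assume x: "x \<in> {0..b}"
    show "((\<lambda>x. H x * E x * u x) has_real_derivative H' x*E x*u x - H x*E x*u x*(D x + B)) (at x within {0..b})"
      using DERIV_mult[OF DERIV_mult[OF dH[OF x] has_field_derivative_at_within[OF dE]]
            has_field_derivative_at_within[OF du]]
      by (rule DERIV_cong) (simp add: algebra_simps)
    have "H' x * E x * u x \<le> H' x * E x"
      using u(1,2)[OF x] H'_nonneg[OF x] Epos[of x] by (intro mult_left_le) auto
    moreover have "H x * E x * \<epsilon> \<le> H x * E x * (u x * (D x + B))"
      using u(3)[OF x] H_nonneg[OF x] Epos[of x] by (intro mult_left_mono) auto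
    ultimately show "\<epsilon> * (H x * E x) \<le> H' x * E x - (H' x*E x*u x - H x*E x*u x*(D x + B))"
      by (simp add: algebra_simps)
  qed (use assms(1) in \<open>auto intro!: continuous_intros cH cE cH'\<close>)
  moreover have "u b = \<epsilon>" by (simp add: u_def \<epsilon>_def)
  ultimately show ?thesis
    using H0 by (simp only: integral_mult_right) (simp add: mult_ac)
qed

text \<open>Outer L2 estimate on [b,T] where D > 0 and 1 + D'/D^2 >= c > 0: the potential h^2 E / D
  has derivative 2 h (G/D) E - h^2 E (1 + D'/D^2), which gives a Poincare inequality with
  the weight 1/D^2 on the gradient, up to the boundary term at b.\<close>
lemma outer_estimate_L2:
  fixes E D D' h G :: "real \<Rightarrow> real" and b T c :: real
  assumes "b \<le> T" "0 < c"
    and dE: "\<And>x. (E has_real_derivative - D x * E x) (at x)"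
    and Epos: "\<And>x. 0 < E x"
    and dD: "\<And>x. (D has_real_derivative D' x) (at x)"
    and Dpos: "\<And>x. x \<in> {b..T} \<Longrightarrow> 0 < D x"
    and ratio: "\<And>x. x \<in> {b..T} \<Longrightarrow> c \<le> 1 + D' x / (D x)^2"
    and dh: "\<And>x. (h has_real_derivative G x) (at x)"
    and cG: "continuous_on {b..T} G"
  shows "c/2 * integral {b..T} (\<lambda>x. h x^2 * E x)
           \<le> 2/c * integral {b..T} (\<lambda>x. (G x / D x)^2 * E x) + h b^2 * E b / D b"
proof -
  have cE: "continuous_on A E" for A
    using dE by (meson DERIV_isCont continuous_at_imp_continuous_on)
  have ch: "continuous_on A h" for A
    using dh by (meson DERIV_isCont continuous_at_imp_continuous_on)
  have cD: "continuous_on A D" for A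
    using dD by (meson DERIV_isCont continuous_at_imp_continuous_on)
  have cGD: "continuous_on {b..T} (\<lambda>x. G x / D x)"
    using Dpos by (intro continuous_on_divide cG cD) force
  have "integral {b..T} (\<lambda>x. c/2 * (h x^2 * E x)) \<le> integral {b..T} (\<lambda>x. 2/c * ((G x / D x)^2 * E x))
          + h b^2 * E b / D b - h T^2 * E T / D T"
  proof (rule ftc_potential_bound[where F = "\<lambda>x. h x^2 * E x / D x" and F' = "\<lambda>x. 2*h x*(G x/D x)*E x - h x^2*E x*(1 + D' x/(D x)^2)"])
    fix x assume x: "x \<in> {b..T}"
    have Dx: "D x \<noteq> 0" using Dpos[OF x] by simp
    have "((\<lambda>x. h x^2 * E x / D x) has_real_derivative 2*h x*(G x/D x)*E x - h x^2*E x*(1 + D' x/(D x)^2)) (at x)"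
      using DERIV_divide[OF DERIV_mult[OF DERIV_power[OF dh, of 2] dE] dD Dx]
      by (rule DERIV_cong) (use Dx in \<open>simp add: field_simps power2_eq_square\<close>)
    then show "((\<lambda>x. h x^2 * E x / D x) has_real_derivative 2*h x*(G x/D x)*E x - h x^2*E x*(1 + D' x/(D x)^2)) (at x within {b..T})"
      by (rule has_field_derivative_at_within)
    have "2 * h x * (G x / D x) \<le> c/2 * h x^2 + 2/c * (G x / D x)^2"
      by (rule young_ineq) fact
    moreover have "h x^2 * c \<le> h x^2 * (1 + D' x/(D x)^2)"
      using ratio[OF x] by (intro mult_left_mono) auto
    ultimately have "c/2 * h x^2 \<le> 2/c * (G x / D x)^2 - (2*h x*(G x/D x) - h x^2*(1 + D' x/(D x)^2))"
      by (simp add: algebra_simps)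
    from mult_right_mono[OF this less_imp_le[OF Epos[of x]]]
    show "c/2 * (h x^2 * E x) \<le> 2/c * ((G x / D x)^2 * E x) - (2*h x*(G x/D x)*E x - h x^2*E x*(1 + D' x/(D x)^2))"
      by (simp add: algebra_simps)
  qed (use assms(1,2) in \<open>auto intro!: continuous_intros ch cE cGD\<close>)
  moreover have "0 \<le> h T^2 * E T / D T"
    using Dpos[of T] Epos[of T] assms(1) by simp
  ultimately show ?thesis by simp
qed

lemma outer_estimate_L1:
  fixes E D D' H H' :: "real \<Rightarrow> real" and b T c :: real
  assumes "b \<le> T" "0 < c"
    and dE: "\<And>x. (E has_real_derivative - D x * E x) (at x)"
    and Epos: "\<And>x. 0 < E x"
    and dD: "\<And>x. (D has_real_derivative D' x) (at x)"
    and Dpos: "\<And>x. x \<in> {b..T} \<Longrightarrow> 0 < D x"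
    and ratio: "\<And>x. x \<in> {b..T} \<Longrightarrow> c \<le> 1 + D' x / (D x)^2"
    and dH: "\<And>x. x \<in> {b..T} \<Longrightarrow> (H has_real_derivative H' x) (at x within {b..T})"
    and cH': "continuous_on {b..T} H'"
    and H_nonneg: "\<And>x. x \<in> {b..T} \<Longrightarrow> 0 \<le> H x"
  shows "c * integral {b..T} (\<lambda>x. H x * E x)
           \<le> integral {b..T} (\<lambda>x. H' x / D x * E x) + H b * E b / D b"
proof -
  have cE: "continuous_on A E" for A
    using dE by (meson DERIV_isCont continuous_at_imp_continuous_on)
  have cH: "continuous_on {b..T} H"
    using dH by (rule DERIV_continuous_on)
  have cD: "continuous_on A D" for A
    using dD by (meson DERIV_isCont continuous_at_imp_continuous_on)
  have "integral {b..T} (\<lambda>x. c * (H x * E x)) \<le> integral {b..T} (\<lambda>x. H' x / D x * E x)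
          + H b * E b / D b - H T * E T / D T"
  proof (rule ftc_potential_bound[where F = "\<lambda>x. H x * E x / D x" and F' = "\<lambda>x. H' x/D x*E x - H x*E x*(1 + D' x/(D x)^2)"])
    show "continuous_on {b..T} (\<lambda>x. H' x / D x * E x)"
      using Dpos by (intro continuous_on_mult continuous_on_divide cH' cD cE) force
    fix x assume x: "x \<in> {b..T}"
    have Dx: "D x \<noteq> 0" using Dpos[OF x] by simp
    show "((\<lambda>x. H x * E x / D x) has_real_derivative H' x/D x*E x - H x*E x*(1 + D' x/(D x)^2)) (at x within {b..T})"
      using DERIV_divide[OF DERIV_mult[OF dH[OF x] has_field_derivative_at_within[OF dE]]
            has_field_derivative_at_within[OF dD] Dx]
      by (rule DERIV_cong) (use Dx in \<open>simp add: field_simps power2_eq_square\<close>)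
    have "H x * E x * c \<le> H x * E x * (1 + D' x/(D x)^2)"
      using ratio[OF x] H_nonneg[OF x] Epos[of x] by (intro mult_left_mono) auto
    then show "c * (H x * E x) \<le> H' x / D x * E x - (H' x/D x*E x - H x*E x*(1 + D' x/(D x)^2))"
      by (simp add: algebra_simps)
  qed (use assms(1) in \<open>auto intro!: continuous_intros cH cE\<close>)
  moreover have "0 \<le> H T * E T / D T"
    using Dpos[of T] Epos[of T] H_nonneg[of T] assms(1) by simp
  ultimately show ?thesis by simp
qed

text \<open>Real arithmetic combining the inner and outer L2 estimates: the boundary term at b produced
  by the outer estimate is controlled by the inner one.\<close>
lemma combine_estimates_L2:
  fixes \<epsilon> c d I J Hb Io J' :: real
  assumes "0 < \<epsilon>" "0 < c" "0 < d" "0 \<le> I" "0 \<le> J" "0 \<le> Hb" "0 \<le> J'"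
    and inner: "\<epsilon>/2 * I + \<epsilon> * Hb \<le> 2/\<epsilon> * J"
    and outer: "c/2 * Io \<le> 2/c * J' + Hb / d"
  shows "I + Io \<le> (4/\<epsilon>^2 + 4/c^2 + 4/(c*\<epsilon>^2*d)) * (J + J')"
proof -
  have "0 \<le> \<epsilon> * Hb" "0 \<le> \<epsilon>/2 * I" using assms(1,4,6) by simp_all
  then have "\<epsilon>/2 * I \<le> 2/\<epsilon> * J" "\<epsilon> * Hb \<le> 2/\<epsilon> * J" using inner by linarith+
  then have I_le: "I \<le> 4/\<epsilon>^2 * J" and Hb_le: "Hb \<le> 2/\<epsilon>^2 * J"
    using assms(1) by (simp_all add: field_simps power2_eq_square)
  have "Hb / d \<le> 2/(\<epsilon>^2 * d) * J"
    using divide_right_mono[OF Hb_le, of d] assms(3) by (simp add: field_simps)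
  then have "c/2 * Io \<le> 2/c * J' + 2/(\<epsilon>^2 * d) * J" using outer by linarith
  then have Io_le: "Io \<le> 4/c^2 * J' + 4/(c * \<epsilon>^2 * d) * J"
    using assms(2) by (simp add: field_simps power2_eq_square)
  have "(4/\<epsilon>^2 + 4/c^2 + 4/(c*\<epsilon>^2*d)) * (J + J')
         = 4/\<epsilon>^2 * J + (4/c^2 * J' + 4/(c * \<epsilon>^2 * d) * J)
           + (4/c^2 * J + (4/\<epsilon>^2 + 4/(c*\<epsilon>^2*d)) * J')"
    by (simp add: algebra_simps add_divide_distrib)
  moreover have "0 \<le> 4/c^2 * J + (4/\<epsilon>^2 + 4/(c*\<epsilon>^2*d)) * J'"
    using assms by (intro add_nonneg_nonneg mult_nonneg_nonneg) auto
  ultimately show ?thesis using I_le Io_le by linarith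
qed

lemma combine_estimates_L1:
  fixes \<epsilon> c d I J Hb Io J' :: real
  assumes "0 < \<epsilon>" "0 < c" "0 < d" "0 \<le> I" "0 \<le> J" "0 \<le> Hb" "0 \<le> J'"
    and inner: "\<epsilon> * I + \<epsilon> * Hb \<le> J"
    and outer: "c * Io \<le> J' + Hb / d"
  shows "I + Io \<le> (1/\<epsilon> + 1/c + 1/(c*\<epsilon>*d)) * (J + J')"
proof -
  have "0 \<le> \<epsilon> * Hb" "0 \<le> \<epsilon> * I" using assms(1,4,6) by simp_all
  then have "\<epsilon> * I \<le> J" "\<epsilon> * Hb \<le> J" using inner by linarith+
  then have I_le: "I \<le> 1/\<epsilon> * J" and Hb_le: "Hb \<le> 1/\<epsilon> * J"
    using assms(1) by (simp_all add: field_simps)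
  have "Hb / d \<le> 1/(\<epsilon> * d) * J"
    using divide_right_mono[OF Hb_le, of d] assms(3) by (simp add: field_simps)
  then have "c * Io \<le> J' + 1/(\<epsilon> * d) * J" using outer by linarith
  then have Io_le: "Io \<le> 1/c * J' + 1/(c * \<epsilon> * d) * J"
    using assms(2) by (simp add: field_simps)
  have "(1/\<epsilon> + 1/c + 1/(c*\<epsilon>*d)) * (J + J')
         = 1/\<epsilon> * J + (1/c * J' + 1/(c * \<epsilon> * d) * J) + (1/c * J + (1/\<epsilon> + 1/(c*\<epsilon>*d)) * J')"
    by (simp add: algebra_simps add_divide_distrib)
  moreover have "0 \<le> 1/c * J + (1/\<epsilon> + 1/(c*\<epsilon>*d)) * J'"
    using assms by (intro add_nonneg_nonneg mult_nonneg_nonneg) auto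
  ultimately show ?thesis using I_le Io_le by linarith
qed

lemma poincare_L2_truncated:
  fixes E D D' h G :: "real \<Rightarrow> real" and b B c T :: real
  assumes "0 < b" "0 \<le> B" "0 < c" "b \<le> T"
    and dE: "\<And>x. (E has_real_derivative - D x * E x) (at x)"
    and Epos: "\<And>x. 0 < E x"
    and dD: "\<And>x. (D has_real_derivative D' x) (at x)"
    and DB: "\<And>x. x \<in> {0..b} \<Longrightarrow> 1 \<le> D x + B"
    and Dpos: "\<And>x. b \<le> x \<Longrightarrow> 0 < D x"
    and ratio: "\<And>x. b \<le> x \<Longrightarrow> c \<le> 1 + D' x / (D x)^2"
    and dh: "\<And>x. (h has_real_derivative G x) (at x)"
    and cG: "continuous_on UNIV G"
    and h0: "h 0 = 0"
  defines "\<epsilon> \<equiv> exp (- B * b)"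
  shows "integral {0..T} (\<lambda>x. h x^2 * E x)
           \<le> (4/\<epsilon>^2 + 4/c^2 + 4/(c*\<epsilon>^2*D b))
              * (integral {0..b} (\<lambda>x. G x^2 * E x) + integral {b..T} (\<lambda>x. (G x / D x)^2 * E x))"
proof -
  define I J Io J' where "I = integral {0..b} (\<lambda>x. h x^2 * E x)" and "J = integral {0..b} (\<lambda>x. G x^2 * E x)"
    and "Io = integral {b..T} (\<lambda>x. h x^2 * E x)" and "J' = integral {b..T} (\<lambda>x. (G x / D x)^2 * E x)"
  define hb where "hb = h b^2 * E b"
  have eps: "0 < \<epsilon>" by (simp add: \<epsilon>_def)
  have Db: "0 < D b" using Dpos by simp
  have cE: "continuous_on A E" for A
    using dE by (meson DERIV_isCont continuous_at_imp_continuous_on)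
  have ch: "continuous_on A h" for A
    using dh by (meson DERIV_isCont continuous_at_imp_continuous_on)
  have cD: "continuous_on A D" for A
    using dD by (meson DERIV_isCont continuous_at_imp_continuous_on)
  have I_nonneg: "0 \<le> I" unfolding I_def
    using Epos by (intro integral_nonneg integrable_continuous_interval continuous_intros ch cE)
      (auto intro!: mult_nonneg_nonneg intro: less_imp_le[OF Epos])
  have J_nonneg: "0 \<le> J" unfolding J_def
    using Epos by (intro integral_nonneg integrable_continuous_interval continuous_intros cE
        continuous_on_subset[OF cG]) (auto intro!: mult_nonneg_nonneg intro: less_imp_le[OF Epos])
  have hb_nonneg: "0 \<le> hb" using Epos[of b] by (simp add: hb_def)
  have Dnz: "D x \<noteq> 0" if "b \<le> x" for x using Dpos[OF that] by simp
  have J'_nonneg: "0 \<le> J'" unfolding J'_def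
    by (intro integral_nonneg integrable_continuous_interval continuous_intros cE cD
        continuous_on_subset[OF cG]) (auto intro!: mult_nonneg_nonneg intro: less_imp_le[OF Epos] simp: Dnz)
  have inner: "\<epsilon>/2 * I + \<epsilon> * hb \<le> 2/\<epsilon> * J"
    unfolding I_def J_def hb_def \<epsilon>_def
    using assms(1,2) dE Epos DB dh h0 continuous_on_subset[OF cG]
    by (intro inner_estimate_L2) auto
  have outer: "c/2 * Io \<le> 2/c * J' + hb / D b"
    unfolding Io_def J'_def hb_def
    using assms(3,4) dE Epos dD Dpos ratio dh continuous_on_subset[OF cG]
    by (intro outer_estimate_L2) auto
  have "I + Io \<le> (4/\<epsilon>^2 + 4/c^2 + 4/(c*\<epsilon>^2*D b)) * (J + J')"
    using combine_estimates_L2[OF eps assms(3) Db I_nonneg J_nonneg hb_nonneg J'_nonneg inner outer] .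
  moreover have "integral {0..T} (\<lambda>x. h x^2 * E x) = I + Io"
    unfolding I_def Io_def using assms(1,4)
    by (intro Henstock_Kurzweil_Integration.integral_combine[symmetric] integrable_continuous_interval)
      (auto intro!: continuous_intros ch cE)
  ultimately show ?thesis unfolding J_def J'_def by simp
qed

lemma poincare_L1_truncated:
  fixes E D D' H H' :: "real \<Rightarrow> real" and b B c T :: real
  assumes "0 < b" "0 \<le> B" "0 < c" "b \<le> T"
    and dE: "\<And>x. (E has_real_derivative - D x * E x) (at x)"
    and Epos: "\<And>x. 0 < E x"
    and dD: "\<And>x. (D has_real_derivative D' x) (at x)"
    and DB: "\<And>x. x \<in> {0..b} \<Longrightarrow> 1 \<le> D x + B"
    and Dpos: "\<And>x. b \<le> x \<Longrightarrow> 0 < D x"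
    and ratio: "\<And>x. b \<le> x \<Longrightarrow> c \<le> 1 + D' x / (D x)^2"
    and dH: "\<And>x. x \<in> {0..T} \<Longrightarrow> (H has_real_derivative H' x) (at x within {0..T})"
    and cH': "continuous_on {0..T} H'"
    and H'_nonneg: "\<And>x. x \<in> {0..T} \<Longrightarrow> 0 \<le> H' x"
    and H_nonneg: "\<And>x. x \<in> {0..T} \<Longrightarrow> 0 \<le> H x"
    and H0: "H 0 = 0"
  defines "\<epsilon> \<equiv> exp (- B * b)"
  shows "integral {0..T} (\<lambda>x. H x * E x)
           \<le> (1/\<epsilon> + 1/c + 1/(c*\<epsilon>*D b))
              * (integral {0..b} (\<lambda>x. H' x * E x) + integral {b..T} (\<lambda>x. H' x / D x * E x))"
proof -
  define I J Io J' where "I = integral {0..b} (\<lambda>x. H x * E x)" and "J = integral {0..b} (\<lambda>x. H' x * E x)"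
    and "Io = integral {b..T} (\<lambda>x. H x * E x)" and "J' = integral {b..T} (\<lambda>x. H' x / D x * E x)"
  define Hb where "Hb = H b * E b"
  have eps: "0 < \<epsilon>" by (simp add: \<epsilon>_def)
  have Db: "0 < D b" using Dpos by simp
  have sub: "{0..b} \<subseteq> {0..T}" "{b..T} \<subseteq> {0..T}" using assms(1,4) by auto
  have cE: "continuous_on A E" for A
    using dE by (meson DERIV_isCont continuous_at_imp_continuous_on)
  have cD: "continuous_on A D" for A
    using dD by (meson DERIV_isCont continuous_at_imp_continuous_on)
  have cH: "continuous_on {0..T} H"
    using dH by (rule DERIV_continuous_on)
  have Dnz: "D x \<noteq> 0" if "b \<le> x" for x using Dpos[OF that] by simp
  have I_nonneg: "0 \<le> I" unfolding I_def using sub H_nonneg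
    by (intro integral_nonneg integrable_continuous_interval continuous_intros cE
        continuous_on_subset[OF cH]) (auto intro!: mult_nonneg_nonneg intro: less_imp_le[OF Epos])
  have J_nonneg: "0 \<le> J" unfolding J_def using sub H'_nonneg
    by (intro integral_nonneg integrable_continuous_interval continuous_intros cE
        continuous_on_subset[OF cH']) (auto intro!: mult_nonneg_nonneg intro: less_imp_le[OF Epos])
  have J'_nonneg: "0 \<le> J'" unfolding J'_def using sub H'_nonneg Dpos
    by (intro integral_nonneg integrable_continuous_interval continuous_intros cE cD
        continuous_on_subset[OF cH']) (auto intro!: mult_nonneg_nonneg divide_nonneg_pos
        intro: less_imp_le[OF Epos] simp: Dnz)
  have Hb_nonneg: "0 \<le> Hb" using Epos[of b] H_nonneg[of b] assms(1,4) by (simp add: Hb_def)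
  have inner: "\<epsilon> * I + \<epsilon> * Hb \<le> J"
    unfolding I_def J_def Hb_def \<epsilon>_def using assms(1,2) dE Epos DB H0 sub
    by (intro inner_estimate_L1 DERIV_subset[OF dH] continuous_on_subset[OF cH'] H'_nonneg H_nonneg)
      auto
  have outer: "c * Io \<le> J' + Hb / D b"
    unfolding Io_def J'_def Hb_def using assms(3,4) dE Epos dD Dpos ratio sub
    by (intro outer_estimate_L1 DERIV_subset[OF dH] continuous_on_subset[OF cH'] H_nonneg) auto
  have "I + Io \<le> (1/\<epsilon> + 1/c + 1/(c*\<epsilon>*D b)) * (J + J')"
    using combine_estimates_L1[OF eps assms(3) Db I_nonneg J_nonneg Hb_nonneg J'_nonneg inner outer] .
  moreover have "integral {0..T} (\<lambda>x. H x * E x) = I + Io"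
    unfolding I_def Io_def using assms(1,4)
    by (intro Henstock_Kurzweil_Integration.integral_combine[symmetric] integrable_continuous_interval)
      (auto intro!: continuous_intros cH cE)
  ultimately show ?thesis unfolding J_def J'_def by simp
qed

lemma nn_integral_continuous_interval:
  fixes f :: "real \<Rightarrow> real"
  assumes "continuous_on {a..b} f" "\<And>x. x \<in> {a..b} \<Longrightarrow> 0 \<le> f x"
  shows "(\<integral>\<^sup>+x. ennreal (f x) * indicator {a..b} x \<partial>lborel) = ennreal (integral {a..b} f)"
  by (rule nn_integral_has_integral_lebesgue')
    (use assms integrable_continuous_interval[OF assms(1)] in \<open>auto simp: integrable_integral\<close>)

lemma integral_le_nn_integral:
  fixes p w :: "real \<Rightarrow> real"
  assumes cp: "continuous_on {a..b} p" and p_nonneg: "\<And>x. x \<in> {a..b} \<Longrightarrow> 0 \<le> p x"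
    and p_le: "\<And>x. x \<in> {a..b} \<Longrightarrow> p x \<le> w x" and sub: "{a..b} \<subseteq> A"
  shows "ennreal (integral {a..b} p) \<le> (\<integral>\<^sup>+x. ennreal (w x) * indicator A x \<partial>lborel)"
proof -
  have "(\<integral>\<^sup>+x. ennreal (p x) * indicator {a..b} x \<partial>lborel) = ennreal (integral {a..b} p)"
    using cp p_nonneg by (rule nn_integral_continuous_interval)
  moreover have "(\<integral>\<^sup>+x. ennreal (p x) * indicator {a..b} x \<partial>lborel)
                   \<le> (\<integral>\<^sup>+x. ennreal (w x) * indicator A x \<partial>lborel)"
    using p_le sub by (intro nn_integral_mono) (auto simp: indicator_def intro: ennreal_leI)
  ultimately show ?thesis by simp
qed

lemma nn_integral_half_line_le:
  fixes f :: "real \<Rightarrow> real"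
  assumes cf: "continuous_on {a..} f" and f_nonneg: "\<And>x. a \<le> x \<Longrightarrow> 0 \<le> f x"
    and "a \<le> a'" and bound: "\<And>T. a' \<le> T \<Longrightarrow> integral {a..T} f \<le> M"
  shows "(\<integral>\<^sup>+x. ennreal (f x) * indicator {a..} x \<partial>lborel) \<le> ennreal M"
proof -
  define fn where "fn n x = ennreal (f x) * indicator {a..a' + real n} x" for n x
  have meas: "fn n \<in> borel_measurable borel" for n
  proof -
    have "continuous_on {a..a' + real n} f" using cf by (rule continuous_on_subset) auto
    then have "(\<lambda>x. indicator {a..a' + real n} x *\<^sub>R f x) \<in> borel_measurable borel"
      by (intro borel_measurable_continuous_on_indicator) auto
    then have "(\<lambda>x. ennreal (indicator {a..a' + real n} x *\<^sub>R f x)) \<in> borel_measurable borel"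
      by measurable
    moreover have "ennreal (indicator {a..a' + real n} x *\<^sub>R f x) = fn n x" for x
      by (auto simp: fn_def indicator_def)
    ultimately show ?thesis by simp
  qed
  have inc: "incseq fn"
    by (auto simp: incseq_def le_fun_def fn_def indicator_def)
  have sup: "(SUP n. fn n x) = ennreal (f x) * indicator {a..} x" for x
  proof (cases "a \<le> x")
    case True
    obtain n :: nat where "x - a' \<le> real n" using real_arch_simple by blast
    then have "fn n x = ennreal (f x)" using True by (auto simp: fn_def)
    moreover have "fn m x \<le> ennreal (f x)" for m by (auto simp: fn_def indicator_def)
    ultimately have "(SUP n. fn n x) = ennreal (f x)"
      by (intro antisym SUP_least) (auto intro: SUP_upper2[of n])
    then show ?thesis using True by simp
  next
    case False then show ?thesis by (simp add: fn_def)
  qed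
  have "(\<integral>\<^sup>+x. ennreal (f x) * indicator {a..} x \<partial>lborel) = (SUP n. integral\<^sup>N lborel (fn n))"
    unfolding sup[symmetric] by (rule nn_integral_monotone_convergence_SUP[OF inc]) (use meas in simp)
  also have "\<dots> \<le> ennreal M"
  proof (rule SUP_least)
    fix n
    have "integral\<^sup>N lborel (fn n) = ennreal (integral {a..a' + real n} f)"
      unfolding fn_def
      by (rule nn_integral_continuous_interval) (auto intro: continuous_on_subset[OF cf] f_nonneg)
    also have "\<dots> \<le> ennreal M" using bound[of "a' + real n"] by (auto intro: ennreal_leI)
    finally show "integral\<^sup>N lborel (fn n) \<le> ennreal M" .
  qed
  finally show ?thesis .
qed

lemma half_line_bound:
  fixes f p q w :: "real \<Rightarrow> real" and b K :: real
  assumes "0 \<le> b" "0 < K"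
    and cf: "continuous_on {0..} f" and f_nonneg: "\<And>x. 0 \<le> x \<Longrightarrow> 0 \<le> f x"
    and cp: "continuous_on {0..b} p" and p_nonneg: "\<And>x. x \<in> {0..b} \<Longrightarrow> 0 \<le> p x"
    and p_le: "\<And>x. x \<in> {0..b} \<Longrightarrow> p x \<le> w x"
    and cq: "continuous_on {b..} q" and q_nonneg: "\<And>x. b \<le> x \<Longrightarrow> 0 \<le> q x"
    and q_le: "\<And>x. b \<le> x \<Longrightarrow> q x \<le> w x"
    and bound: "\<And>T. b \<le> T \<Longrightarrow> integral {0..T} f \<le> K * (integral {0..b} p + integral {b..T} q)"
  shows "(\<integral>\<^sup>+x. ennreal (f x) * indicator {0..} x \<partial>lborel)
           \<le> ennreal (2 * K) * (\<integral>\<^sup>+x. ennreal (w x) * indicator {0..} x \<partial>lborel)"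
    (is "_ \<le> _ * ?W")
proof (cases "?W = \<infinity>")
  case True
  then show ?thesis using assms(2) by (simp add: ennreal_mult_top)
next
  case False
  then obtain a where a: "?W = ennreal a" "0 \<le> a" by (cases ?W) auto
  have p_int: "integral {0..b} p \<le> a"
    using integral_le_nn_integral[OF cp p_nonneg p_le, where A = "{0..}"] a by auto
  have q_int: "integral {b..T} q \<le> a" for T
    using integral_le_nn_integral[OF continuous_on_subset[OF cq] q_nonneg q_le, where A = "{0..}" and b = T] a assms(1)
    by auto
  have "integral {0..T} f \<le> 2 * K * a" if "b \<le> T" for T
  proof -
    have "integral {0..T} f \<le> K * (a + a)"
      using bound[OF that] mult_left_mono[OF add_mono[OF p_int q_int[of T]], of K] assms(2) by linarith
    then show ?thesis by simp
  qed
  then have "(\<integral>\<^sup>+x. ennreal (f x) * indicator {0..} x \<partial>lborel) \<le> ennreal (2 * K * a)"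
    using assms(1) by (intro nn_integral_half_line_le[OF cf f_nonneg]) auto
  also have "\<dots> = ennreal (2 * K) * ?W" using a assms(2) by (simp add: ennreal_mult)
  finally show ?thesis .
qed

lemma half_line_L2:
  fixes E D D' g G :: "real \<Rightarrow> real" and S b B c :: real
  assumes "0 \<le> S" "S < b" "0 \<le> B" "0 < c"
    and dE: "\<And>x. (E has_real_derivative - D x * E x) (at x)"
    and Epos: "\<And>x. 0 < E x"
    and dD: "\<And>x. (D has_real_derivative D' x) (at x)"
    and DB: "\<And>x. x \<in> {0..b} \<Longrightarrow> 1 \<le> D x + B"
    and Dpos: "\<And>x. b \<le> x \<Longrightarrow> 0 < D x"
    and ratio: "\<And>x. b \<le> x \<Longrightarrow> c \<le> 1 + D' x / (D x)^2"
    and dg: "\<And>x. (g has_real_derivative G x) (at x)"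
    and cG: "continuous_on UNIV G"
  defines "K \<equiv> 4/exp (- B * b)^2 + 4/c^2 + 4/(c * exp (- B * b)^2 * D b)"
  shows "(\<integral>\<^sup>+x. ennreal ((g x - g 0)^2 * E x) * indicator {0..} x \<partial>lborel)
           \<le> ennreal (2 * K) * (\<integral>\<^sup>+x. ennreal (G x^2 * (1 + (if \<bar>x\<bar> > S then 1 else 0) / (D x)^2) * E x)
                                      * indicator {0..} x \<partial>lborel)"
proof (rule half_line_bound[where p = "\<lambda>x. G x^2 * E x" and q = "\<lambda>x. (G x / D x)^2 * E x"])
  have cE: "continuous_on A E" for A
    using dE by (meson DERIV_isCont continuous_at_imp_continuous_on)
  have cg: "continuous_on A g" for A
    using dg by (meson DERIV_isCont continuous_at_imp_continuous_on)
  have cD: "continuous_on A D" for A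
    using dD by (meson DERIV_isCont continuous_at_imp_continuous_on)
  have Db: "0 < D b" using Dpos by simp
  show "0 < K" unfolding K_def using assms(4) Db by (intro add_pos_pos) auto
  show "continuous_on {0..} (\<lambda>x. (g x - g 0)^2 * E x)" "continuous_on {0..b} (\<lambda>x. G x^2 * E x)"
    by (auto intro!: continuous_intros cg cE continuous_on_subset[OF cG])
  show "continuous_on {b..} (\<lambda>x. (G x / D x)^2 * E x)"
    using Dpos by (intro continuous_intros cE cD continuous_on_subset[OF cG]) force+
  fix x
  show "0 \<le> (g x - g 0)^2 * E x" "0 \<le> G x^2 * E x" "0 \<le> (G x / D x)^2 * E x"
    using Epos[of x] by simp_all
  show "G x^2 * E x \<le> G x^2 * (1 + (if \<bar>x\<bar> > S then 1 else 0) / (D x)^2) * E x"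
  proof -
    have "G x^2 * 1 \<le> G x^2 * (1 + (if \<bar>x\<bar> > S then 1 else 0) / (D x)^2)"
      by (intro mult_left_mono) auto
    then show ?thesis using Epos[of x] by (intro mult_right_mono) auto
  qed
  assume "b \<le> x"
  then show "(G x / D x)^2 * E x \<le> G x^2 * (1 + (if \<bar>x\<bar> > S then 1 else 0) / (D x)^2) * E x"
    using assms(1,2) Epos[of x] by (simp add: power_divide algebra_simps)
next
  fix T assume "b \<le> T"
  then show "integral {0..T} (\<lambda>x. (g x - g 0)^2 * E x)
              \<le> K * (integral {0..b} (\<lambda>x. G x^2 * E x) + integral {b..T} (\<lambda>x. (G x / D x)^2 * E x))"
    unfolding K_def using assms(1-4) dE Epos dD DB Dpos ratio cG
    by (intro poincare_L2_truncated[where h = "\<lambda>x. g x - g 0"])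
      (auto intro!: derivative_eq_intros dg)
qed (use assms(1,2) in auto)

lemma abs_primitive:
  fixes g G H :: "real \<Rightarrow> real"
  assumes dg: "\<And>x. (g has_real_derivative G x) (at x)" and cG: "continuous_on UNIV G"
    and H_def: "\<And>x. H x = integral {0..x} (\<lambda>t. \<bar>G t\<bar>)"
  shows "\<And>x T. x \<in> {0..T} \<Longrightarrow> (H has_real_derivative \<bar>G x\<bar>) (at x within {0..T})"
    and "H 0 = 0" and "\<And>x. 0 \<le> H x" and "\<And>x. 0 \<le> x \<Longrightarrow> \<bar>g x - g 0\<bar> \<le> H x"
proof -
  have cAG: "continuous_on A (\<lambda>t. \<bar>G t\<bar>)" for A
    by (intro continuous_intros continuous_on_subset[OF cG]) auto
  show "(H has_real_derivative \<bar>G x\<bar>) (at x within {0..T})" if "x \<in> {0..T}" for x T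
    unfolding H_def[abs_def] using integral_has_vector_derivative[OF cAG that]
    by (simp add: has_real_derivative_iff_has_vector_derivative)
  show "H 0 = 0" by (simp add: H_def)
  show "0 \<le> H x" for x
    unfolding H_def by (rule integral_nonneg) (auto intro: integrable_continuous_interval cAG)
  show "\<bar>g x - g 0\<bar> \<le> H x" if "0 \<le> x" for x
  proof -
    have "(G has_integral (g x - g 0)) {0..x}"
      using that dg by (intro fundamental_theorem_of_calculus)
        (auto simp: has_real_derivative_iff_has_vector_derivative[symmetric] intro: has_field_derivative_at_within)
    then have "g x - g 0 = integral {0..x} G" by (simp add: integral_unique)
    then show ?thesis unfolding H_def
      using integral_norm_bound_integral[of G "{0..x}" "\<lambda>t. \<bar>G t\<bar>"]
        integrable_continuous_interval[OF continuous_on_subset[OF cG]] integrable_continuous_interval[OF cAG]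
      by auto
  qed
qed

text \<open>The weighted L1 inequality on the half line; the L1 estimates are applied to the primitive
  H x = integral of |G| over [0,x], which dominates |g x - g 0|.\<close>
lemma half_line_L1:
  fixes E D D' g G :: "real \<Rightarrow> real" and S b B c :: real
  assumes "0 \<le> S" "S < b" "0 \<le> B" "0 < c"
    and dE: "\<And>x. (E has_real_derivative - D x * E x) (at x)"
    and Epos: "\<And>x. 0 < E x"
    and dD: "\<And>x. (D has_real_derivative D' x) (at x)"
    and DB: "\<And>x. x \<in> {0..b} \<Longrightarrow> 1 \<le> D x + B"
    and Dpos: "\<And>x. b \<le> x \<Longrightarrow> 0 < D x"
    and ratio: "\<And>x. b \<le> x \<Longrightarrow> c \<le> 1 + D' x / (D x)^2"
    and dg: "\<And>x. (g has_real_derivative G x) (at x)"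
    and cG: "continuous_on UNIV G"
  defines "K \<equiv> 1/exp (- B * b) + 1/c + 1/(c * exp (- B * b) * D b)"
  shows "(\<integral>\<^sup>+x. ennreal (\<bar>g x - g 0\<bar> * E x) * indicator {0..} x \<partial>lborel)
           \<le> ennreal (2 * K) * (\<integral>\<^sup>+x. ennreal (\<bar>G x\<bar> * (1 + (if \<bar>x\<bar> > S then 1 else 0) / \<bar>D x\<bar>) * E x)
                                      * indicator {0..} x \<partial>lborel)"
proof (rule half_line_bound[where p = "\<lambda>x. \<bar>G x\<bar> * E x" and q = "\<lambda>x. \<bar>G x\<bar> / D x * E x"])
  have cE: "continuous_on A E" for A
    using dE by (meson DERIV_isCont continuous_at_imp_continuous_on)
  have cg: "continuous_on A g" for A
    using dg by (meson DERIV_isCont continuous_at_imp_continuous_on)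
  have cD: "continuous_on A D" for A
    using dD by (meson DERIV_isCont continuous_at_imp_continuous_on)
  have cAG: "continuous_on A (\<lambda>t. \<bar>G t\<bar>)" for A
    by (intro continuous_intros continuous_on_subset[OF cG]) auto
  have Db: "0 < D b" using Dpos by simp
  show "0 < K" unfolding K_def using assms(4) Db by (intro add_pos_pos) auto
  show "continuous_on {0..} (\<lambda>x. \<bar>g x - g 0\<bar> * E x)" "continuous_on {0..b} (\<lambda>x. \<bar>G x\<bar> * E x)"
    by (auto intro!: continuous_intros cg cE continuous_on_subset[OF cG])
  show "continuous_on {b..} (\<lambda>x. \<bar>G x\<bar> / D x * E x)"
    using Dpos by (intro continuous_intros cE cD continuous_on_subset[OF cG]) force+
  show "0 \<le> \<bar>g x - g 0\<bar> * E x" "0 \<le> \<bar>G x\<bar> * E x" for x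
    using Epos[of x] by simp_all
  show "0 \<le> \<bar>G x\<bar> / D x * E x" if "b \<le> x" for x
    using Epos[of x] Dpos[OF that] by simp
  show "\<bar>G x\<bar> * E x \<le> \<bar>G x\<bar> * (1 + (if \<bar>x\<bar> > S then 1 else 0) / \<bar>D x\<bar>) * E x" for x
  proof -
    have "\<bar>G x\<bar> * 1 \<le> \<bar>G x\<bar> * (1 + (if \<bar>x\<bar> > S then 1 else 0) / \<bar>D x\<bar>)"
      by (intro mult_left_mono) auto
    then show ?thesis using Epos[of x] by (intro mult_right_mono) auto
  qed
  show "\<bar>G x\<bar> / D x * E x \<le> \<bar>G x\<bar> * (1 + (if \<bar>x\<bar> > S then 1 else 0) / \<bar>D x\<bar>) * E x"
    if "b \<le> x" for x
    using assms(1,2) that Epos[of x] Dpos[OF that] by (simp add: algebra_simps)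
  fix T assume T: "b \<le> T"
  define H where "H x = integral {0..x} (\<lambda>t. \<bar>G t\<bar>)" for x
  note H = abs_primitive[OF dg cG H_def]
  have cH: "continuous_on {0..T} H"
    using H(1) by (rule DERIV_continuous_on)
  have "integral {0..T} (\<lambda>x. \<bar>g x - g 0\<bar> * E x) \<le> integral {0..T} (\<lambda>x. H x * E x)"
    using H(4) Epos
    by (intro integral_le integrable_continuous_interval)
      (auto intro!: continuous_intros cg cE cH mult_right_mono less_imp_le)
  also have "\<dots> \<le> K * (integral {0..b} (\<lambda>x. \<bar>G x\<bar> * E x) + integral {b..T} (\<lambda>x. \<bar>G x\<bar> / D x * E x))"
    unfolding K_def using assms(1-4) T dE Epos dD DB Dpos ratio H(1,3)
    by (intro poincare_L1_truncated[where H' = "\<lambda>x. \<bar>G x\<bar>"] cAG) (auto simp: H(2))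
  finally show "integral {0..T} (\<lambda>x. \<bar>g x - g 0\<bar> * E x)
      \<le> K * (integral {0..b} (\<lambda>x. \<bar>G x\<bar> * E x) + integral {b..T} (\<lambda>x. \<bar>G x\<bar> / D x * E x))" .
qed (use assms(1,2) in auto)

lemma nn_integral_reflect_half_line:
  fixes f :: "real \<Rightarrow> ennreal"
  assumes [measurable]: "f \<in> borel_measurable borel"
  shows "(\<integral>\<^sup>+x. f x * indicator {..0} x \<partial>lborel) = (\<integral>\<^sup>+x. f (- x) * indicator {0..} x \<partial>lborel)"
proof -
  have "(\<integral>\<^sup>+x. f x * indicator {..0} x \<partial>lborel) = (\<integral>\<^sup>+x. f x * indicator {..0} x \<partial>distr lborel borel uminus)"
    by (simp add: lborel_distr_uminus)
  also have "\<dots> = (\<integral>\<^sup>+x. f (- x) * indicator {..0} (- x) \<partial>lborel)"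
    by (rule nn_integral_distr) auto
  also have "\<dots> = (\<integral>\<^sup>+x. f (- x) * indicator {0..} x \<partial>lborel)"
    by (intro nn_integral_cong) (auto simp: indicator_def)
  finally show ?thesis .
qed

lemma whole_line_from_half_lines:
  fixes f w :: "real \<Rightarrow> real" and K :: ennreal
  assumes [measurable]: "f \<in> borel_measurable borel" "w \<in> borel_measurable borel"
    and right: "(\<integral>\<^sup>+x. ennreal (f x) * indicator {0..} x \<partial>lborel)
                  \<le> K * (\<integral>\<^sup>+x. ennreal (w x) * indicator {0..} x \<partial>lborel)"
    and left: "(\<integral>\<^sup>+x. ennreal (f (- x)) * indicator {0..} x \<partial>lborel)
                 \<le> K * (\<integral>\<^sup>+x. ennreal (w (- x)) * indicator {0..} x \<partial>lborel)"
  shows "(\<integral>\<^sup>+x. ennreal (f x) \<partial>lborel) \<le> 2 * K * (\<integral>\<^sup>+x. ennreal (w x) \<partial>lborel)"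
proof -
  have "(\<integral>\<^sup>+x. ennreal (f x) \<partial>lborel)
          \<le> (\<integral>\<^sup>+x. ennreal (f x) * indicator {0..} x + ennreal (f x) * indicator {..0} x \<partial>lborel)"
    by (intro nn_integral_mono) (simp add: indicator_def)
  also have "\<dots> = (\<integral>\<^sup>+x. ennreal (f x) * indicator {0..} x \<partial>lborel)
                   + (\<integral>\<^sup>+x. ennreal (f (- x)) * indicator {0..} x \<partial>lborel)"
    by (subst nn_integral_add) (auto simp: nn_integral_reflect_half_line)
  also have "\<dots> \<le> K * (\<integral>\<^sup>+x. ennreal (w x) * indicator {0..} x \<partial>lborel)
                   + K * (\<integral>\<^sup>+x. ennreal (w x) * indicator {..0} x \<partial>lborel)"
    using right left by (simp add: nn_integral_reflect_half_line add_mono)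
  also have "\<dots> \<le> K * (\<integral>\<^sup>+x. ennreal (w x) \<partial>lborel) + K * (\<integral>\<^sup>+x. ennreal (w x) \<partial>lborel)"
    by (intro add_mono mult_left_mono nn_integral_mono) (simp_all add: indicator_def)
  also have "\<dots> = 2 * K * (\<integral>\<^sup>+x. ennreal (w x) \<partial>lborel)"
    by (simp add: mult_2 distrib_right)
  finally show ?thesis .
qed

lemma Var_le_second_moment:
  fixes g :: "real \<Rightarrow> real"
  assumes "prob_space M" and [measurable]: "g \<in> borel_measurable M"
  shows "Var M g \<le> (\<integral>\<^sup>+x. ennreal ((g x - a)^2) \<partial>M)"
proof (cases "(\<integral>\<^sup>+x. ennreal ((g x - a)^2) \<partial>M) = \<infinity>")
  case True
  then show ?thesis by simp
next
  case False
  interpret prob_space M by fact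
  define X where "X x = g x - a" for x
  have [measurable]: "X \<in> borel_measurable M" unfolding X_def by measurable
  obtain v where v: "(\<integral>\<^sup>+x. ennreal ((X x)^2) \<partial>M) = ennreal v"
    using False unfolding X_def by (cases "(\<integral>\<^sup>+x. ennreal ((g x - a)^2) \<partial>M)") auto
  have X2: "integrable M (\<lambda>x. (X x)^2)"
    by (rule integrableI_nn_integral_finite[OF _ _ v]) auto
  have X: "integrable M X" by (rule square_integrable_imp_integrable) (use X2 in auto)
  have "g = (\<lambda>x. X x + a)" by (simp add: X_def)
  then have "integral\<^sup>L M g = expectation X + a"
    using X prob_space by simp
  then have centered: "g x - integral\<^sup>L M g = X x - expectation X" for x
    by (simp add: X_def)
  have "Var M g = (\<integral>\<^sup>+x. ennreal ((X x - expectation X)^2) \<partial>M)"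
    unfolding Var_def centered ..
  also have "\<dots> = ennreal (variance X)"
  proof (rule nn_integral_eq_integral)
    show "integrable M (\<lambda>x. (X x - expectation X)^2)" using X X2 by (simp add: power2_diff)
  qed simp
  also have "\<dots> = ennreal (expectation (\<lambda>x. (X x)^2) - (expectation X)^2)"
    using variance_eq[OF X X2] by simp
  also have "\<dots> \<le> ennreal (expectation (\<lambda>x. (X x)^2))" by (intro ennreal_leI) simp
  also have "\<dots> = (\<integral>\<^sup>+x. ennreal ((X x)^2) \<partial>M)"
    by (rule nn_integral_eq_integral[OF X2, symmetric]) auto
  finally show ?thesis by (simp add: X_def)
qed

lemma distance_le_by_half_mass:
  fixes g :: "real \<Rightarrow> real"
  assumes "prob_space M" and [measurable]: "g \<in> borel_measurable M" "A \<in> sets M"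
    and half: "1/2 \<le> measure M A" and far: "\<And>x. x \<in> A \<Longrightarrow> \<bar>m - a\<bar> \<le> \<bar>g x - a\<bar>"
  shows "ennreal \<bar>m - a\<bar> \<le> 2 * (\<integral>\<^sup>+x. ennreal \<bar>g x - a\<bar> \<partial>M)"
proof -
  interpret prob_space M by fact
  have "ennreal \<bar>m - a\<bar> * ennreal (1/2) \<le> ennreal \<bar>m - a\<bar> * emeasure M A"
    by (intro mult_left_mono) (subst emeasure_eq_measure, rule ennreal_leI[OF half], simp)
  also have "\<dots> = (\<integral>\<^sup>+x. ennreal \<bar>m - a\<bar> * indicator A x \<partial>M)"
    by (simp add: nn_integral_cmult_indicator)
  also have "\<dots> \<le> (\<integral>\<^sup>+x. ennreal \<bar>g x - a\<bar> \<partial>M)"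
    using far by (intro nn_integral_mono) (auto simp: indicator_def intro: ennreal_leI)
  finally have "2 * (ennreal \<bar>m - a\<bar> * ennreal (1/2)) \<le> 2 * (\<integral>\<^sup>+x. ennreal \<bar>g x - a\<bar> \<partial>M)"
    by (intro mult_left_mono) auto
  moreover have "2 * (ennreal \<bar>m - a\<bar> * ennreal (1/2)) = ennreal \<bar>m - a\<bar>"
  proof -
    have "ennreal \<bar>m - a\<bar> = ennreal (2 * (\<bar>m - a\<bar> * (1/2)))" by simp
    also have "\<dots> = ennreal 2 * ennreal (\<bar>m - a\<bar> * (1/2))" by (rule ennreal_mult) auto
    also have "ennreal (\<bar>m - a\<bar> * (1/2)) = ennreal \<bar>m - a\<bar> * ennreal (1/2)"
      by (rule ennreal_mult) auto
    finally show ?thesis by simp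
  qed
  ultimately show ?thesis by simp
qed

lemma median_deviation_le:
  fixes g :: "real \<Rightarrow> real"
  assumes ps: "prob_space M" and [measurable]: "g \<in> borel_measurable M"
    and med: "is_median M g m"
  shows "(\<integral>\<^sup>+x. ennreal \<bar>g x - m\<bar> \<partial>M) \<le> 3 * (\<integral>\<^sup>+x. ennreal \<bar>g x - a\<bar> \<partial>M)"
proof -
  interpret prob_space M by (rule ps)
  have shift: "ennreal \<bar>m - a\<bar> \<le> 2 * (\<integral>\<^sup>+x. ennreal \<bar>g x - a\<bar> \<partial>M)"
  proof (cases "a \<le> m")
    case True
    show ?thesis
      by (rule distance_le_by_half_mass[OF ps, where A = "{x \<in> space M. m \<le> g x}"])
        (use True med in \<open>auto simp: is_median_def\<close>)
  next
    case False
    show ?thesis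
      by (rule distance_le_by_half_mass[OF ps, where A = "{x \<in> space M. g x \<le> m}"])
        (use False med in \<open>auto simp: is_median_def\<close>)
  qed
  have "(\<integral>\<^sup>+x. ennreal \<bar>g x - m\<bar> \<partial>M) \<le> (\<integral>\<^sup>+x. ennreal \<bar>g x - a\<bar> + ennreal \<bar>m - a\<bar> \<partial>M)"
    by (intro nn_integral_mono) (auto simp flip: ennreal_plus intro!: ennreal_leI)
  also have "\<dots> = (\<integral>\<^sup>+x. ennreal \<bar>g x - a\<bar> \<partial>M) + ennreal \<bar>m - a\<bar>"
    by (subst nn_integral_add) (auto simp: emeasure_space_1)
  also have "\<dots> \<le> (\<integral>\<^sup>+x. ennreal \<bar>g x - a\<bar> \<partial>M) + 2 * (\<integral>\<^sup>+x. ennreal \<bar>g x - a\<bar> \<partial>M)"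
    using shift by (rule add_left_mono)
  also have "\<dots> = (1 + 2) * (\<integral>\<^sup>+x. ennreal \<bar>g x - a\<bar> \<partial>M)"
    by (simp only: distrib_right mult_1)
  also have "(1 + 2 :: ennreal) = 3" by simp
  finally show ?thesis .
qed

lemma half_line_inequalities:
  fixes E D D' :: "real \<Rightarrow> real" and S c :: real
  assumes "0 \<le> S" "0 < c"
    and dE: "\<And>x. (E has_real_derivative - D x * E x) (at x)"
    and Epos: "\<And>x. 0 < E x"
    and dD: "\<And>x. (D has_real_derivative D' x) (at x)"
    and Dpos: "\<And>x. S \<le> x \<Longrightarrow> 0 < D x"
    and ratio: "\<And>x. S \<le> x \<Longrightarrow> c \<le> 1 + D' x / (D x)^2"
  shows "\<exists>K>0. \<forall>g G. (\<forall>x. (g has_real_derivative G x) (at x)) \<longrightarrow> continuous_on UNIV G \<longrightarrow>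
     (\<integral>\<^sup>+x. ennreal ((g x - g 0)^2 * E x) * indicator {0..} x \<partial>lborel)
       \<le> ennreal K * (\<integral>\<^sup>+x. ennreal (G x^2 * (1 + (if \<bar>x\<bar> > S then 1 else 0) / (D x)^2) * E x)
                                * indicator {0..} x \<partial>lborel)
     \<and> (\<integral>\<^sup>+x. ennreal (\<bar>g x - g 0\<bar> * E x) * indicator {0..} x \<partial>lborel)
       \<le> ennreal K * (\<integral>\<^sup>+x. ennreal (\<bar>G x\<bar> * (1 + (if \<bar>x\<bar> > S then 1 else 0) / \<bar>D x\<bar>) * E x)
                                * indicator {0..} x \<partial>lborel)"
proof -
  define b where "b = S + 1"
  have cD: "continuous_on {0..b} D"
    using dD by (meson DERIV_isCont continuous_at_imp_continuous_on)
  obtain M where M: "\<And>x. x \<in> {0..b} \<Longrightarrow> \<bar>D x\<bar> \<le> M"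
    using compact_imp_bounded[OF compact_continuous_image[OF cD compact_Icc]]
    unfolding bounded_iff by (metis image_eqI real_norm_def)
  define B where "B = \<bar>M\<bar> + 1"
  have DB: "1 \<le> D x + B" if "x \<in> {0..b}" for x
    using M[OF that] by (simp add: B_def)
  define \<epsilon> where "\<epsilon> = exp (- B * b)"
  define K2 where "K2 = 4/\<epsilon>^2 + 4/c^2 + 4/(c * \<epsilon>^2 * D b)"
  define K1 where "K1 = 1/\<epsilon> + 1/c + 1/(c * \<epsilon> * D b)"
  have Db: "0 < D b" using Dpos assms(1) by (simp add: b_def)
  have K_pos: "0 < K1" "0 < K2" unfolding K1_def K2_def \<epsilon>_def
    using assms(2) Db by (auto intro!: add_pos_pos)
  have hyps: "0 \<le> S" "S < b" "0 \<le> B" "0 < c" "\<And>x. b \<le> x \<Longrightarrow> 0 < D x"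
    "\<And>x. b \<le> x \<Longrightarrow> c \<le> 1 + D' x / (D x)^2"
    using assms(1,2) Dpos ratio by (auto simp: b_def B_def)
  show ?thesis
  proof (intro exI[of _ "2 * (K1 + K2)"] conjI allI impI)
    show "0 < 2 * (K1 + K2)" using K_pos by simp
    fix g G assume dg: "\<forall>x. (g has_real_derivative G x) (at x)" and cG: "continuous_on UNIV G"
    have K_mono: "ennreal (2 * K) * A \<le> ennreal (2 * (K1 + K2)) * A" if "K \<le> K1 + K2" for K A
      using that by (intro mult_right_mono ennreal_leI) auto
    show "(\<integral>\<^sup>+x. ennreal ((g x - g 0)^2 * E x) * indicator {0..} x \<partial>lborel)
       \<le> ennreal (2 * (K1 + K2)) * (\<integral>\<^sup>+x. ennreal (G x^2 * (1 + (if \<bar>x\<bar> > S then 1 else 0) / (D x)^2) * E x)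
                                * indicator {0..} x \<partial>lborel)"
      using half_line_L2[OF hyps(1-4) dE Epos dD DB hyps(5,6), of g G] dg cG K_mono[of K2] K_pos
      unfolding K2_def \<epsilon>_def by (auto intro: order_trans)
    show "(\<integral>\<^sup>+x. ennreal (\<bar>g x - g 0\<bar> * E x) * indicator {0..} x \<partial>lborel)
       \<le> ennreal (2 * (K1 + K2)) * (\<integral>\<^sup>+x. ennreal (\<bar>G x\<bar> * (1 + (if \<bar>x\<bar> > S then 1 else 0) / \<bar>D x\<bar>) * E x)
                                * indicator {0..} x \<partial>lborel)"
      using half_line_L1[OF hyps(1-4) dE Epos dD DB hyps(5,6), of g G] dg cG K_mono[of K1] K_pos
      unfolding K1_def \<epsilon>_def by (auto intro: order_trans)
  qed
qed

lemma smooth_has_deriv: "smooth f \<Longrightarrow> (f has_real_derivative deriv f x) (at x)"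
  unfolding smooth_def DERIV_deriv_iff_real_differentiable by (metis funpow_0)

lemma smooth_has_second_deriv:
  "smooth f \<Longrightarrow> (deriv f has_real_derivative deriv (deriv f) x) (at x)"
  unfolding smooth_def DERIV_deriv_iff_real_differentiable by (metis funpow_0 funpow_Suc_right o_apply)

lemma smooth_continuous: "smooth f \<Longrightarrow> continuous_on A f"
  by (meson DERIV_isCont continuous_at_imp_continuous_on smooth_has_deriv)

lemma smooth_continuous_deriv: "smooth f \<Longrightarrow> continuous_on A (deriv f)"
  by (meson DERIV_isCont continuous_at_imp_continuous_on smooth_has_second_deriv)

lemma nn_integral_mu:
  fixes V f :: "real \<Rightarrow> real"
  assumes [measurable]: "V \<in> borel_measurable borel" "f \<in> borel_measurable borel"
    and f_nonneg: "\<And>x. 0 \<le> f x"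
  shows "(\<integral>\<^sup>+x. ennreal (f x) \<partial>mu V) = (\<integral>\<^sup>+x. ennreal (f x * exp (- V x)) \<partial>lborel)"
proof -
  have "(\<integral>\<^sup>+x. ennreal (f x) \<partial>mu V) = (\<integral>\<^sup>+x. ennreal (exp (- V x)) * ennreal (f x) \<partial>lborel)"
    unfolding mu_def by (rule nn_integral_density) auto
  also have "\<dots> = (\<integral>\<^sup>+x. ennreal (f x * exp (- V x)) \<partial>lborel)"
    using f_nonneg by (intro nn_integral_cong) (simp add: ennreal_mult[symmetric] mult.commute)
  finally show ?thesis .
qed

lemma even_deriv_odd:
  fixes V :: "real \<Rightarrow> real"
  assumes dV: "\<And>x. (V has_real_derivative deriv V x) (at x)" and even: "\<And>x. V (- x) = V x"
  shows "deriv V (- x) = - deriv V x"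
proof -
  have "((\<lambda>x. V (- x)) has_real_derivative deriv V (- x) * (- 1)) (at x)"
    by (rule DERIV_chain2[OF dV]) (auto intro!: derivative_eq_intros)
  moreover have "(\<lambda>x. V (- x)) = V" using even by auto
  ultimately have "(V has_real_derivative - deriv V (- x)) (at x)" by simp
  from DERIV_unique[OF this dV[of x]] show ?thesis by simp
qed

lemma concave_below_tangent:
  fixes V :: "real \<Rightarrow> real"
  assumes cc: "concave_on {R<..} V" and dV: "(V has_real_derivative d) (at x0)"
    and "R < x0" "x0 < x"
  shows "V x \<le> V x0 + d * (x - x0)"
proof -
  have lim: "((\<lambda>h. (V (x0 + h) - V x0) / h) \<longlongrightarrow> d) (at_right 0)"
    using dV unfolding DERIV_def by (rule tendsto_mono[OF at_le, rotated]) simp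
  have cv: "convex_on {R<..} (\<lambda>x. - V x)" using cc by (simp add: concave_on_def)
  have "\<forall>\<^sub>F h in at_right 0. (V x - V x0) / (x - x0) \<le> (V (x0 + h) - V x0) / h"
  proof (rule eventually_mono[OF eventually_at_right_real[of 0 "x - x0"]])
    fix h assume h: "h \<in> {0<..<x - x0}"
    have "((- V x0) - (- V (x0 + h))) / (x0 - (x0 + h)) \<le> ((- V x0) - (- V x)) / (x0 - x)"
      using convex_on_slope_le(1)[OF cv, of x0 x "x0 + h"] assms(3,4) h by auto
    then show "(V x - V x0) / (x - x0) \<le> (V (x0 + h) - V x0) / h"
      using h assms(4) by (simp add: field_simps)
  qed (use assms(4) in simp)
  then have "(V x - V x0) / (x - x0) \<le> d"
    by (intro tendsto_lowerbound[OF lim]) simp_all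
  then show ?thesis using assms(4) by (simp add: field_simps)
qed

text \<open>If V is concave on (R,oo) and exp(-V) is a probability density, then V' > 0 on (R,oo):
  otherwise V would be bounded above on a half line and exp(-V) not integrable.\<close>
lemma concave_integrable_potential_increasing:
  fixes V :: "real \<Rightarrow> real"
  assumes dV: "\<And>x. (V has_real_derivative deriv V x) (at x)"
    and cc: "concave_on {R<..} V" and ps: "prob_space (mu V)" and x0: "R < x0"
  shows "0 < deriv V x0"
proof (rule ccontr)
  assume "\<not> 0 < deriv V x0"
  then have V_le: "V y \<le> V x0" if "x0 \<le> y" for y
  proof (cases "y = x0")
    case False
    have "deriv V x0 * (y - x0) \<le> 0"
      using \<open>\<not> 0 < deriv V x0\<close> that by (intro mult_nonpos_nonneg) auto
    then show ?thesis using concave_below_tangent[OF cc dV x0, of y] that False by linarith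
  qed simp
  have [measurable]: "V \<in> borel_measurable borel"
    using dV by (intro borel_measurable_continuous_onI) (meson DERIV_isCont continuous_at_imp_continuous_on)
  define e where "e = exp (- V x0)"
  have e: "0 < e" by (simp add: e_def)
  have "ennreal e * ennreal (2 / e) = (\<integral>\<^sup>+x. ennreal e * indicator {x0..x0 + 2/e} x \<partial>lborel)"
    using e by (simp add: nn_integral_cmult_indicator)
  also have "\<dots> \<le> (\<integral>\<^sup>+x. ennreal (exp (- V x)) * indicator UNIV x \<partial>lborel)"
    by (intro nn_integral_mono) (auto simp: indicator_def e_def intro!: ennreal_leI V_le)
  also have "\<dots> = emeasure (mu V) UNIV"
    unfolding mu_def by (rule emeasure_density[symmetric]) auto
  also have "\<dots> = 1"
    using prob_space.emeasure_space_1[OF ps] by (simp add: mu_def)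
  finally show False
    using e by (simp add: ennreal_mult[symmetric])
qed

text \<open>The hypotheses of the theorem yield a threshold S > R beyond which V' > 0 and
  1 + V''/V'^2 >= 1/4 (since the ratio tends to r > -1/2 > -3/4).\<close>
lemma tail_conditions:
  fixes V :: "real \<Rightarrow> real" and R r :: real
  assumes dV: "\<And>x. (V has_real_derivative deriv V x) (at x)"
    and cc: "concave_on {R<..} V" and ps: "prob_space (mu V)" and "0 < R"
    and lim: "((\<lambda>x. deriv (deriv V) x / (deriv V x)^2) \<longlongrightarrow> r) at_top" and "- 1/2 < r"
  shows "\<exists>S>R. (\<forall>x. S \<le> x \<longrightarrow> 0 < deriv V x) \<and> (\<forall>x. S \<le> x \<longrightarrow> 1/4 \<le> 1 + deriv (deriv V) x / (deriv V x)^2)"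
proof -
  have "-3/4 < r" using assms(6) by simp
  from order_tendstoD(1)[OF lim this]
  obtain N where N: "\<And>x. N \<le> x \<Longrightarrow> -3/4 < deriv (deriv V) x / (deriv V x)^2"
    by (auto simp: eventually_at_top_linorder)
  show ?thesis
  proof (intro exI[of _ "max N (R + 1)"] conjI allI impI)
    fix x assume x: "max N (R + 1) \<le> x"
    then show "0 < deriv V x"
      using concave_integrable_potential_increasing[OF dV cc ps, of x] by simp
    show "1/4 \<le> 1 + deriv (deriv V) x / (deriv V x)^2"
      using N[of x] x by linarith
  qed simp
qed

lemma whole_line_mu_inequality:
  fixes V f w :: "real \<Rightarrow> real" and K :: ennreal
  assumes [measurable]: "V \<in> borel_measurable borel" "f \<in> borel_measurable borel"
      "w \<in> borel_measurable borel"
    and even: "\<And>x. V (- x) = V x"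
    and f_nonneg: "\<And>x. 0 \<le> f x" and w_nonneg: "\<And>x. 0 \<le> w x"
    and right: "(\<integral>\<^sup>+x. ennreal (f x * exp (- V x)) * indicator {0..} x \<partial>lborel)
                  \<le> K * (\<integral>\<^sup>+x. ennreal (w x * exp (- V x)) * indicator {0..} x \<partial>lborel)"
    and left: "(\<integral>\<^sup>+x. ennreal (f (- x) * exp (- V x)) * indicator {0..} x \<partial>lborel)
                 \<le> K * (\<integral>\<^sup>+x. ennreal (w (- x) * exp (- V x)) * indicator {0..} x \<partial>lborel)"
  shows "(\<integral>\<^sup>+x. ennreal (f x) \<partial>mu V) \<le> 2 * K * (\<integral>\<^sup>+x. ennreal (w x) \<partial>mu V)"
proof -
  have "(\<integral>\<^sup>+x. ennreal (f x * exp (- V x)) \<partial>lborel)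
          \<le> 2 * K * (\<integral>\<^sup>+x. ennreal (w x * exp (- V x)) \<partial>lborel)"
    by (rule whole_line_from_half_lines) (use right left in \<open>simp_all add: even\<close>)
  then show ?thesis using f_nonneg w_nonneg by (simp add: nn_integral_mu)
qed

lemma even_potential_centered_inequalities:
  fixes V :: "real \<Rightarrow> real" and S c :: real
  assumes sV: "smooth V" and even: "\<And>x. V (- x) = V x"
    and "0 \<le> S" "0 < c"
    and Dpos: "\<And>x. S \<le> x \<Longrightarrow> 0 < deriv V x"
    and ratio: "\<And>x. S \<le> x \<Longrightarrow> c \<le> 1 + deriv (deriv V) x / (deriv V x)^2"
  shows "\<exists>K>0. \<forall>g. smooth g \<longrightarrow>
     (\<integral>\<^sup>+x. ennreal ((g x - g 0)^2) \<partial>mu V)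
       \<le> ennreal K * (\<integral>\<^sup>+x. ennreal ((deriv g x)^2 * (1 + (if \<bar>x\<bar> > S then 1 else 0) / (deriv V x)^2)) \<partial>mu V)
     \<and> (\<integral>\<^sup>+x. ennreal \<bar>g x - g 0\<bar> \<partial>mu V)
       \<le> ennreal K * (\<integral>\<^sup>+x. ennreal (\<bar>deriv g x\<bar> * (1 + (if \<bar>x\<bar> > S then 1 else 0) / \<bar>deriv V x\<bar>)) \<partial>mu V)"
proof -
  have dV: "(V has_real_derivative deriv V x) (at x)" for x using smooth_has_deriv[OF sV] .
  have [measurable]: "V \<in> borel_measurable borel" "deriv V \<in> borel_measurable borel"
    using smooth_continuous[OF sV] smooth_continuous_deriv[OF sV] by (auto intro: borel_measurable_continuous_onI)
  have odd: "deriv V (- x) = - deriv V x" for x using even_deriv_odd[OF dV even] .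
  have dE: "((\<lambda>x. exp (- V x)) has_real_derivative - deriv V x * exp (- V x)) (at x)" for x
    by (rule DERIV_cong, (rule derivative_eq_intros dV)+) auto
  obtain K where "0 < K" and half: "\<And>g G. \<forall>x. (g has_real_derivative G x) (at x) \<Longrightarrow> continuous_on UNIV G \<Longrightarrow>
     (\<integral>\<^sup>+x. ennreal ((g x - g 0)^2 * exp (- V x)) * indicator {0..} x \<partial>lborel)
       \<le> ennreal K * (\<integral>\<^sup>+x. ennreal (G x^2 * (1 + (if \<bar>x\<bar> > S then 1 else 0) / (deriv V x)^2) * exp (- V x))
                                * indicator {0..} x \<partial>lborel)
     \<and> (\<integral>\<^sup>+x. ennreal (\<bar>g x - g 0\<bar> * exp (- V x)) * indicator {0..} x \<partial>lborel)
       \<le> ennreal K * (\<integral>\<^sup>+x. ennreal (\<bar>G x\<bar> * (1 + (if \<bar>x\<bar> > S then 1 else 0) / \<bar>deriv V x\<bar>) * exp (- V x))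
                                * indicator {0..} x \<partial>lborel)"
    using half_line_inequalities[OF assms(3,4) dE _ smooth_has_second_deriv[OF sV] Dpos ratio] by auto
  show ?thesis
  proof (intro exI[of _ "2 * K"] conjI allI impI)
    show "0 < 2 * K" using \<open>0 < K\<close> by simp
    fix g :: "real \<Rightarrow> real" assume sg: "smooth g"
    have [measurable]: "g \<in> borel_measurable borel" "deriv g \<in> borel_measurable borel"
      using smooth_continuous[OF sg] smooth_continuous_deriv[OF sg] by (auto intro: borel_measurable_continuous_onI)
    have dg_refl: "((\<lambda>x. g (- x)) has_real_derivative - deriv g (- x)) (at x)" for x
    proof -
      have "((\<lambda>x. g (- x)) has_real_derivative deriv g (- x) * (- 1)) (at x)"
        by (rule DERIV_chain2[OF smooth_has_deriv[OF sg]]) (auto intro!: derivative_eq_intros)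
      then show ?thesis by simp
    qed
    have c_refl: "continuous_on UNIV (\<lambda>x. - deriv g (- x))"
      by (intro continuous_intros continuous_on_compose2[OF smooth_continuous_deriv[OF sg]]) auto
    note right = half[OF allI[OF smooth_has_deriv[OF sg]] smooth_continuous_deriv[OF sg]]
    note left = half[OF allI[OF dg_refl] c_refl]
    have two_K: "ennreal (2 * K) = 2 * ennreal K" using \<open>0 < K\<close> by (simp add: ennreal_mult)
    show "(\<integral>\<^sup>+x. ennreal ((g x - g 0)^2) \<partial>mu V)
       \<le> ennreal (2 * K) * (\<integral>\<^sup>+x. ennreal ((deriv g x)^2 * (1 + (if \<bar>x\<bar> > S then 1 else 0) / (deriv V x)^2)) \<partial>mu V)"
      unfolding two_K
      by (rule whole_line_mu_inequality, measurable, measurable, measurable)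
        (use right left in \<open>simp_all add: even odd\<close>)
    show "(\<integral>\<^sup>+x. ennreal \<bar>g x - g 0\<bar> \<partial>mu V)
       \<le> ennreal (2 * K) * (\<integral>\<^sup>+x. ennreal (\<bar>deriv g x\<bar> * (1 + (if \<bar>x\<bar> > S then 1 else 0) / \<bar>deriv V x\<bar>)) \<partial>mu V)"
      unfolding two_K
      by (rule whole_line_mu_inequality, measurable, measurable, measurable)
        (use right left in \<open>simp_all add: even odd\<close>)
  qed
qed

lemma variance_and_median_inequalities:
  fixes V :: "real \<Rightarrow> real" and S K :: real
  assumes ps: "prob_space (mu V)" and "0 < K"
    and centered: "\<forall>g. smooth g \<longrightarrow>
     (\<integral>\<^sup>+x. ennreal ((g x - g 0)^2) \<partial>mu V)
       \<le> ennreal K * (\<integral>\<^sup>+x. ennreal ((deriv g x)^2 * (1 + (if \<bar>x\<bar> > S then 1 else 0) / (deriv V x)^2)) \<partial>mu V)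
     \<and> (\<integral>\<^sup>+x. ennreal \<bar>g x - g 0\<bar> \<partial>mu V)
       \<le> ennreal K * (\<integral>\<^sup>+x. ennreal (\<bar>deriv g x\<bar> * (1 + (if \<bar>x\<bar> > S then 1 else 0) / \<bar>deriv V x\<bar>)) \<partial>mu V)"
    and sg: "smooth g"
  shows "Var (mu V) g \<le> ennreal (3 * K) * (\<integral>\<^sup>+ x. ennreal ((deriv g x)\<^sup>2 *
          (1 + (if \<bar>x\<bar> > S then 1 else 0) / (deriv V x)\<^sup>2)) \<partial>(mu V))"
    and "is_median (mu V) g m \<Longrightarrow> (\<integral>\<^sup>+ x. ennreal \<bar>g x - m\<bar> \<partial>(mu V))
          \<le> ennreal (3 * K) * (\<integral>\<^sup>+ x. ennreal (\<bar>deriv g x\<bar> *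
          (1 + (if \<bar>x\<bar> > S then 1 else 0) / \<bar>deriv V x\<bar>)) \<partial>(mu V))"
proof -
  have [measurable]: "g \<in> borel_measurable (mu V)"
    using smooth_continuous[OF sg] by (simp add: mu_def borel_measurable_continuous_onI)
  note Kg = centered[rule_format, OF sg]
  have "Var (mu V) g \<le> (\<integral>\<^sup>+x. ennreal ((g x - g 0)^2) \<partial>mu V)"
    by (rule Var_le_second_moment[OF ps]) measurable
  moreover have "ennreal K * A \<le> ennreal (3 * K) * A" for A
    using \<open>0 < K\<close> by (intro mult_right_mono ennreal_leI) auto
  ultimately show "Var (mu V) g \<le> ennreal (3 * K) * (\<integral>\<^sup>+ x. ennreal ((deriv g x)\<^sup>2 *
          (1 + (if \<bar>x\<bar> > S then 1 else 0) / (deriv V x)\<^sup>2)) \<partial>(mu V))"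
    using Kg by (auto intro: order_trans)
  assume "is_median (mu V) g m"
  then have "(\<integral>\<^sup>+x. ennreal \<bar>g x - m\<bar> \<partial>mu V) \<le> 3 * (\<integral>\<^sup>+x. ennreal \<bar>g x - g 0\<bar> \<partial>mu V)"
    by (intro median_deviation_le[OF ps]) measurable
  also have "\<dots> \<le> 3 * (ennreal K * (\<integral>\<^sup>+ x. ennreal (\<bar>deriv g x\<bar> *
      (1 + (if \<bar>x\<bar> > S then 1 else 0) / \<bar>deriv V x\<bar>)) \<partial>(mu V)))"
    using Kg by (intro mult_left_mono) auto
  also have "\<dots> = ennreal (3 * K) * (\<integral>\<^sup>+ x. ennreal (\<bar>deriv g x\<bar> *
      (1 + (if \<bar>x\<bar> > S then 1 else 0) / \<bar>deriv V x\<bar>)) \<partial>(mu V))"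
    using \<open>0 < K\<close> by (simp add: ennreal_mult mult.assoc)
  finally show "(\<integral>\<^sup>+ x. ennreal \<bar>g x - m\<bar> \<partial>(mu V)) \<le> ennreal (3 * K) * (\<integral>\<^sup>+ x. ennreal (\<bar>deriv g x\<bar> *
      (1 + (if \<bar>x\<bar> > S then 1 else 0) / \<bar>deriv V x\<bar>)) \<partial>(mu V))" .
qed

theorem mainTheorem7:
  fixes V :: "real \<Rightarrow> real" and R r :: real
  assumes "smooth V"
    and "\<And>x. V (- x) = V x"
    and "prob_space (mu V)"
    and "R > 0"
    and "concave_on {R<..} V"
    and "((\<lambda>x. deriv (deriv V) x / (deriv V x)\<^sup>2) \<longlongrightarrow> r) at_top"
    and "r > - 1/2"
  shows "\<exists>S C. S > R \<and> C > 0 \<and>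
    (\<forall>g. smooth g \<longrightarrow>
      Var (mu V) g \<le> ennreal C * (\<integral>\<^sup>+ x. ennreal ((deriv g x)\<^sup>2 *
          (1 + (if \<bar>x\<bar> > S then 1 else 0) / (deriv V x)\<^sup>2)) \<partial>(mu V))
      \<and> (\<forall>m. is_median (mu V) g m \<longrightarrow>
          (\<integral>\<^sup>+ x. ennreal \<bar>g x - m\<bar> \<partial>(mu V)) \<le> ennreal C * (\<integral>\<^sup>+ x. ennreal (\<bar>deriv g x\<bar> *
          (1 + (if \<bar>x\<bar> > S then 1 else 0) / \<bar>deriv V x\<bar>)) \<partial>(mu V))))"
proof -
  obtain S where "R < S" and tail: "\<forall>x. S \<le> x \<longrightarrow> 0 < deriv V x"
      "\<forall>x. S \<le> x \<longrightarrow> 1/4 \<le> 1 + deriv (deriv V) x / (deriv V x)^2"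
    using tail_conditions[OF smooth_has_deriv[OF assms(1)] assms(5,3,4,6,7)] by blast
  then obtain K where "0 < K" and centered: "\<forall>g. smooth g \<longrightarrow>
     (\<integral>\<^sup>+x. ennreal ((g x - g 0)^2) \<partial>mu V)
       \<le> ennreal K * (\<integral>\<^sup>+x. ennreal ((deriv g x)^2 * (1 + (if \<bar>x\<bar> > S then 1 else 0) / (deriv V x)^2)) \<partial>mu V)
     \<and> (\<integral>\<^sup>+x. ennreal \<bar>g x - g 0\<bar> \<partial>mu V)
       \<le> ennreal K * (\<integral>\<^sup>+x. ennreal (\<bar>deriv g x\<bar> * (1 + (if \<bar>x\<bar> > S then 1 else 0) / \<bar>deriv V x\<bar>)) \<partial>mu V)"
    using even_potential_centered_inequalities[OF assms(1,2), of S "1/4"] assms(4) by auto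
  show ?thesis
    using \<open>R < S\<close> \<open>0 < K\<close> variance_and_median_inequalities[OF assms(3) \<open>0 < K\<close> centered]
    by (intro exI[of _ S] exI[of _ "3 * K"]) auto
qed

end
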